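(* For any real $\lambda$ and $\theta$ and any $0<x<\pi/2$, \[ \left|\lambda\int_0^x\frac{\cos(\lambda y-\theta)}{\cos y}\,dy-\sin\theta\right|<\frac{1}{\cos x}. \] *)

theory Defs
  imports "HOL-Analysis.Analysis"
begin

end

theory Submission
  imports Defs "HOL-Complex_Analysis.Complex_Analysis"
begin

(* For l > 0 the left-hand side is Re (exp (-i \<theta>) (l B - i)) with
   B = integral over [0, x] of exp (i l y) / cos y, so it suffices to show |l B - i| < 1 / cos x.
   Cauchy's theorem for exp (i l z) / cos z on the rectangle [0, x] \<times> [0, T] gives
   l B - i = - l I\<^sub>2 - l I\<^sub>3 - i (1 - m), where I\<^sub>2, I\<^sub>3 are the integrals over the right and top
   sides and m = l \<integral>\<^sub>0\<^sup>T exp (- l t) / cosh t dt comes from the imaginary axis. As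
   |cos z| \<ge> cos (Re z) cosh (Im z), we get l |I\<^sub>2| \<le> m / cos x and l |I\<^sub>3| = O(1 / cosh T), hence
   |l B - i| \<le> 1 + m (1 / cos x - 1) + O(1 / cosh T). Integrating the pointwise bound
   1 / cosh t \<le> 1/2 + exp (- t) - exp (- 2 t) / 2 shows m \<le> 1 - 1 / ((l + 1) (l + 2)) for all T,
   and T \<rightarrow> \<infinity> gives the strict inequality. Negative l reduces to positive l via
   (l, \<theta>) \<mapsto> (- l, - \<theta>). *)

lemma cos_pos_less_one:
  fixes x :: real
  assumes "0 < x" "x < pi / 2"
  shows "0 < cos x" "cos x < 1"
  using assms cos_gt_zero_pi[of x] cos_monotone_0_pi[of 0 x] by simp_all

lemma cos_Re_cosh_Im_le_norm_cos: "\<bar>cos (Re z)\<bar> * cosh (Im z) \<le> norm (cos z)"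
proof -
  have "Re (cos z) = cos (Re z) * cosh (Im z)"
    by (simp add: Re_cos cosh_def)
  then show ?thesis
    using abs_Re_le_cmod[of "cos z"] by (simp add: abs_mult)
qed

lemma cos_nonzero_if_abs_Re_less:
  assumes "\<bar>Re z\<bar> < pi / 2"
  shows "cos z \<noteq> 0"
proof -
  have "0 < cos \<bar>Re z\<bar>"
    using assms by (intro cos_gt_zero_pi) auto
  then have "0 < \<bar>cos (Re z)\<bar> * cosh (Im z)"
    by simp
  with cos_Re_cosh_Im_le_norm_cos show ?thesis
    by (metis norm_zero not_le)
qed

lemma abs_Re_less_eq_Int: "{z. \<bar>Re z\<bar> < c} = {z. Re z > - c} \<inter> {z. Re z < c}"
  by auto

lemma open_abs_Re_less: "open {z. \<bar>Re z\<bar> < c}"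
  unfolding abs_Re_less_eq_Int by (intro open_Int open_halfspace_Re_lt open_halfspace_Re_gt)

lemma convex_abs_Re_less: "convex {z. \<bar>Re z\<bar> < c}"
  unfolding abs_Re_less_eq_Int by (intro convex_Int convex_halfspace_Re_lt convex_halfspace_Re_gt)

definition exp_div_cos :: "real \<Rightarrow> complex \<Rightarrow> complex" where
  "exp_div_cos l z = exp (\<i> * of_real l * z) / cos z"

lemma holomorphic_exp_div_cos: "exp_div_cos l holomorphic_on {z. \<bar>Re z\<bar> < pi / 2}"
  unfolding exp_div_cos_def
  by (intro holomorphic_intros) (use cos_nonzero_if_abs_Re_less in blast)

lemma exp_div_cos_contour_integrable_linepath:
  assumes "\<bar>Re a\<bar> < pi / 2" "\<bar>Re b\<bar> < pi / 2"
  shows "exp_div_cos l contour_integrable_on linepath a b"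
proof -
  have "closed_segment a b \<subseteq> {z. \<bar>Re z\<bar> < pi / 2}"
    using assms by (intro closed_segment_subset convex_abs_Re_less) auto
  then show ?thesis
    by (intro contour_integrable_holomorphic_simple[OF holomorphic_exp_div_cos open_abs_Re_less]) auto
qed

lemma norm_exp_div_cos_le:
  assumes "\<bar>Re z\<bar> \<le> x" "x < pi / 2"
  shows "norm (exp_div_cos l z) \<le> exp (- l * Im z) / (cos x * cosh (Im z))"
proof -
  have "0 < cos x"
    using assms by (intro cos_gt_zero_pi) auto
  have "cos x \<le> cos \<bar>Re z\<bar>"
    using assms by (intro cos_monotone_0_pi_le) auto
  then have "cos x * cosh (Im z) \<le> \<bar>cos (Re z)\<bar> * cosh (Im z)"
    by (intro mult_right_mono) auto
  also have "\<dots> \<le> norm (cos z)"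
    by (rule cos_Re_cosh_Im_le_norm_cos)
  finally have "cos x * cosh (Im z) \<le> norm (cos z)" .
  moreover have "norm (exp (\<i> * of_real l * z)) = exp (- l * Im z)"
    by (simp add: norm_exp_eq_Re)
  ultimately show ?thesis
    unfolding exp_div_cos_def norm_divide using \<open>0 < cos x\<close>
    by (intro frac_le) auto
qed

lemma exp_div_cos_imaginary: "exp_div_cos l (Complex 0 t) = of_real (exp (- l * t) / cosh t)"
proof -
  have "cos (Complex 0 t) = of_real (cosh t)"
    by (simp add: complex_eq_iff Re_cos Im_cos cosh_def)
  moreover have "exp (\<i> * of_real l * Complex 0 t) = of_real (exp (- l * t))"
    by (simp add: complex_eq_iff Re_exp Im_exp)
  ultimately show ?thesis
    by (simp add: exp_div_cos_def)
qed

lemma has_contour_integral_linepath_vertical_iff: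
  fixes f :: "complex \<Rightarrow> complex"
  assumes "v < w"
  shows "(f has_contour_integral I) (linepath (Complex u v) (Complex u w)) \<longleftrightarrow>
         ((\<lambda>t. \<i> * f (Complex u t)) has_integral I) {v..w}"
proof -
  have linepath: "linepath (Complex u v) (Complex u w) s = Complex u ((w - v) * s + v)" for s
    by (simp add: linepath_def complex_eq_iff algebra_simps)
  have height: "Complex u w - Complex u v = \<i> * of_real (w - v)"
    by (simp add: complex_eq_iff)
  have "((\<lambda>t. \<i> * f (Complex u t)) has_integral I) {v..w} \<longleftrightarrow>
        ((\<lambda>s. \<i> * f (Complex u ((w - v) * s + v))) has_integral I /\<^sub>R (w - v)) {0..1}"
    using has_integral_affinity_iff[where m="w - v" and f="\<lambda>t. \<i> * f (Complex u t)" and c=v and a=v and b=w] assms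
    by simp
  also have "\<dots> \<longleftrightarrow> ((\<lambda>s. (w - v) *\<^sub>R (\<i> * f (Complex u ((w - v) * s + v)))) has_integral I) {0..1}"
    using assms by (simp add: has_integral_cmul_iff')
  also have "\<dots> \<longleftrightarrow> (f has_contour_integral I) (linepath (Complex u v) (Complex u w))"
    by (simp add: has_contour_integral_linepath linepath height scaleR_conv_of_real mult_ac)
  finally show ?thesis ..
qed

lemma inverse_cosh_le:
  fixes t :: real
  assumes "0 \<le> t"
  shows "1 / cosh t \<le> 1 / 2 + exp (- t) - exp (- t) ^ 2 / 2"
proof -
  define u where "u = exp (- t)"
  have u: "0 < u" "u \<le> 1"
    using assms by (auto simp: u_def)
  have cosh: "cosh t = (1 + u ^ 2) / (2 * u)"
    using u by (simp add: cosh_def u_def exp_minus field_simps power2_eq_square)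
  have "0 \<le> (1 - u) ^ 2 * (1 - u ^ 2)"
    using u by (simp add: power_le_one)
  moreover have "(1 / 2 + u - u ^ 2 / 2) * (1 + u ^ 2) - 2 * u = (1 - u) ^ 2 * (1 - u ^ 2) / 2"
    by (simp add: field_simps power2_eq_square)
  ultimately have "2 * u \<le> (1 / 2 + u - u ^ 2 / 2) * (1 + u ^ 2)"
    by linarith
  have "1 / cosh t = 2 * u / (1 + u ^ 2)"
    unfolding cosh by simp
  also have "\<dots> \<le> 1 / 2 + u - u ^ 2 / 2"
    using \<open>2 * u \<le> _\<close> by (simp add: pos_divide_le_eq add_pos_nonneg)
  finally show ?thesis
    by (simp add: u_def)
qed

lemma has_real_derivative_exp_sech_majorant_primitive:
  fixes l t :: real
  assumes "0 \<le> l"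
  shows "((\<lambda>t. - exp (- l * t) / 2 - l / (l + 1) * exp (- (l + 1) * t)
                 + l / (2 * (l + 2)) * exp (- (l + 2) * t))
          has_real_derivative l * exp (- l * t) * (1 / 2 + exp (- t) - exp (- t) ^ 2 / 2)) (at t)"
proof -
  have "l + 1 \<noteq> 0" "l + 2 \<noteq> 0"
    using assms by auto
  then have "((\<lambda>t. - exp (- l * t) / 2 - l / (l + 1) * exp (- (l + 1) * t)
                  + l / (2 * (l + 2)) * exp (- (l + 2) * t))
          has_real_derivative l / 2 * exp (- l * t) + l * exp (- (l + 1) * t) - l / 2 * exp (- (l + 2) * t))
          (at t)"
    by (auto intro!: derivative_eq_intros) (simp add: divide_simps; simp add: algebra_simps)
  moreover have "exp (- (l + 1) * t) = exp (- l * t) * exp (- t)"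
                "exp (- (l + 2) * t) = exp (- l * t) * exp (- t) ^ 2"
    by (simp_all add: exp_add[symmetric] power2_eq_square algebra_simps)
  ultimately show ?thesis
    by (simp add: algebra_simps)
qed

lemma laplace_transform_sech_bound:
  fixes l T :: real
  assumes "0 < l" "0 \<le> T"
  shows "l * integral {0..T} (\<lambda>t. exp (- l * t) / cosh t) \<le> 1 - 1 / ((l + 1) * (l + 2))"
proof -
  define P where "P t = - exp (- l * t) / 2 - l / (l + 1) * exp (- (l + 1) * t)
                        + l / (2 * (l + 2)) * exp (- (l + 2) * t)" for t
  define P' where "P' t = l * exp (- l * t) * (1 / 2 + exp (- t) - exp (- t) ^ 2 / 2)" for t
  have "(P has_real_derivative P' t) (at t)" for t
    unfolding P_def P'_def using assms by (intro has_real_derivative_exp_sech_majorant_primitive) auto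
  then have "(P' has_integral P T - P 0) {0..T}"
    using assms by (intro fundamental_theorem_of_calculus)
      (auto simp: has_real_derivative_iff_has_vector_derivative[symmetric] intro: has_field_derivative_at_within)
  moreover have "(\<lambda>t. l * (exp (- l * t) / cosh t)) integrable_on {0..T}"
    by (intro integrable_continuous_interval continuous_intros) auto
  moreover have "l * (exp (- l * t) / cosh t) \<le> P' t" if "t \<in> {0..T}" for t
  proof -
    have "l * exp (- l * t) * (1 / cosh t) \<le> P' t"
      using inverse_cosh_le[of t] that assms unfolding P'_def by (intro mult_left_mono) auto
    then show ?thesis
      by simp
  qed
  ultimately have "integral {0..T} (\<lambda>t. l * (exp (- l * t) / cosh t)) \<le> P T - P 0"
    by (meson has_integral_le integrable_integral)
  then have "l * integral {0..T} (\<lambda>t. exp (- l * t) / cosh t) \<le> P T - P 0"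
    by (simp only: integral_mult_right)
  moreover have "l / (2 * (l + 2)) * exp (- (l + 2) * T) \<le> 1 / 2 * exp (- l * T)"
    using assms by (intro mult_mono) (auto simp: field_simps)
  moreover have "0 \<le> l / (l + 1) * exp (- (l + 1) * T)"
    using assms by simp
  moreover have "1 / 2 + l / (l + 1) - l / (2 * (l + 2)) = 1 - 1 / ((l + 1) * (l + 2))"
  proof -
    have "l + 1 \<noteq> 0" "l + 2 \<noteq> 0"
      using assms by auto
    then show ?thesis
      by (simp add: divide_simps) (simp add: algebra_simps)
  qed
  ultimately show ?thesis
    unfolding P_def by (simp only: mult_zero_right exp_zero mult_1_right)
qed

lemma rectangle_contour_integral_exp_div_cos:
  assumes "0 \<le> x" "x < pi / 2" "0 \<le> T"
  shows "contour_integral (linepath 0 (Complex x 0)) (exp_div_cos l)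
       + contour_integral (linepath (Complex x 0) (Complex x T)) (exp_div_cos l)
       + contour_integral (linepath (Complex x T) (Complex 0 T)) (exp_div_cos l)
       + contour_integral (linepath (Complex 0 T) 0) (exp_div_cos l) = 0"
proof -
  have "path_image (rectpath 0 (Complex x T)) \<subseteq> cbox 0 (Complex x T)"
    using assms by (intro path_image_rectpath_subset_cbox) auto
  also have "\<dots> \<subseteq> {z. \<bar>Re z\<bar> < pi / 2}"
    using assms by (auto simp: in_cbox_complex_iff)
  finally have "(exp_div_cos l has_contour_integral 0) (rectpath 0 (Complex x T))"
    by (intro Cauchy_theorem_convex_simple[OF holomorphic_exp_div_cos convex_abs_Re_less]) auto
  moreover have "exp_div_cos l contour_integrable_on linepath a b"
    if "a \<in> {0, Complex x 0, Complex x T, Complex 0 T}" "b \<in> {0, Complex x 0, Complex x T, Complex 0 T}" for a b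
    using that assms by (intro exp_div_cos_contour_integrable_linepath) auto
  ultimately show ?thesis
    unfolding rectpath_def Let_def
    by (auto simp: contour_integral_join contour_integrable_joinI valid_path_join add.assoc
             dest!: contour_integral_unique)
qed

lemma contour_integral_exp_div_cos_real_segment:
  assumes "0 < x" "x < pi / 2"
  shows "contour_integral (linepath 0 (Complex x 0)) (exp_div_cos l)
       = integral {0..x} (\<lambda>y. exp_div_cos l (of_real y))"
proof -
  have "exp_div_cos l contour_integrable_on linepath 0 (Complex x 0)"
    using assms by (intro exp_div_cos_contour_integrable_linepath) auto
  then have "(exp_div_cos l has_contour_integral contour_integral (linepath 0 (Complex x 0)) (exp_div_cos l))
               (linepath 0 (Complex x 0))"
    by (rule has_contour_integral_integral)
  then have "((\<lambda>y. exp_div_cos l (of_real y)) has_integral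
              contour_integral (linepath 0 (Complex x 0)) (exp_div_cos l)) {0..x}"
    using assms has_contour_integral_linepath_Reals_iff[of 0 "Complex x 0"]
    by (simp add: complex_is_Real_iff)
  then show ?thesis
    by (simp add: integral_unique)
qed

lemma contour_integral_exp_div_cos_imaginary_segment:
  assumes "0 < T"
  shows "contour_integral (linepath (Complex 0 T) 0) (exp_div_cos l)
       = - (\<i> * of_real (integral {0..T} (\<lambda>t. exp (- l * t) / cosh t)))"
proof -
  have "(\<lambda>t. exp (- l * t) / cosh t) integrable_on {0..T}"
    by (intro integrable_continuous_interval continuous_intros) auto
  then have "((\<lambda>t. \<i> * exp_div_cos l (Complex 0 t)) has_integral
              \<i> * of_real (integral {0..T} (\<lambda>t. exp (- l * t) / cosh t))) {0..T}"
    unfolding exp_div_cos_imaginary by (intro has_integral_mult_right has_integral_of_real) auto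
  then have "(exp_div_cos l has_contour_integral \<i> * of_real (integral {0..T} (\<lambda>t. exp (- l * t) / cosh t)))
               (linepath 0 (Complex 0 T))"
    using has_contour_integral_linepath_vertical_iff[of 0 T _ _ 0] assms
    by (simp add: zero_complex.code)
  then show ?thesis
    using contour_integral_reversepath[of "linepath 0 (Complex 0 T)" "exp_div_cos l"]
    by (simp add: contour_integral_unique)
qed

lemma norm_contour_integral_exp_div_cos_vertical_le:
  assumes "0 \<le> x" "x < pi / 2" "0 < T"
  shows "norm (contour_integral (linepath (Complex x 0) (Complex x T)) (exp_div_cos l))
       \<le> integral {0..T} (\<lambda>t. exp (- l * t) / cosh t) / cos x"
proof -
  let ?I = "contour_integral (linepath (Complex x 0) (Complex x T)) (exp_div_cos l)"
  have "(exp_div_cos l has_contour_integral ?I) (linepath (Complex x 0) (Complex x T))"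
    using assms by (intro has_contour_integral_integral exp_div_cos_contour_integrable_linepath) auto
  then have I: "((\<lambda>t. \<i> * exp_div_cos l (Complex x t)) has_integral ?I) {0..T}"
    using has_contour_integral_linepath_vertical_iff assms by blast
  have "0 < cos x"
    using assms by (intro cos_gt_zero_pi) auto
  then have "(\<lambda>t. exp (- l * t) / cosh t / cos x) integrable_on {0..T}"
    by (intro integrable_continuous_interval continuous_intros) auto
  moreover have "norm (\<i> * exp_div_cos l (Complex x t)) \<le> exp (- l * t) / cosh t / cos x" for t
    using norm_exp_div_cos_le[of "Complex x t" x l] assms by (simp add: norm_mult mult.commute)
  ultimately have "norm (integral {0..T} (\<lambda>t. \<i> * exp_div_cos l (Complex x t)))
                   \<le> integral {0..T} (\<lambda>t. exp (- l * t) / cosh t / cos x)"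
    by (intro integral_norm_bound_integral[OF has_integral_integrable[OF I]])
  then show ?thesis
    unfolding integral_unique[OF I] integral_divide .
qed

lemma norm_contour_integral_exp_div_cos_horizontal_le:
  assumes "0 \<le> l" "0 \<le> x" "x < pi / 2" "0 \<le> T"
  shows "norm (contour_integral (linepath (Complex x T) (Complex 0 T)) (exp_div_cos l))
       \<le> x / (cos x * cosh T)"
proof -
  have "0 < cos x"
    using assms by (intro cos_gt_zero_pi) auto
  have "(exp_div_cos l has_contour_integral contour_integral (linepath (Complex x T) (Complex 0 T)) (exp_div_cos l))
          (linepath (Complex x T) (Complex 0 T))"
    using assms by (intro has_contour_integral_integral exp_div_cos_contour_integrable_linepath) auto
  moreover have "norm (exp_div_cos l z) \<le> 1 / (cos x * cosh T)"
    if "z \<in> closed_segment (Complex x T) (Complex 0 T)" for z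
  proof -
    have "Im z = T" "\<bar>Re z\<bar> \<le> x"
      using that assms by (auto simp: closed_segment_same_Im closed_segment_eq_real_ivl split: if_splits)
    then have "norm (exp_div_cos l z) \<le> exp (- l * T) / (cos x * cosh T)"
      using norm_exp_div_cos_le[of z x l] assms by simp
    also have "\<dots> \<le> 1 / (cos x * cosh T)"
      using assms \<open>0 < cos x\<close> by (intro divide_right_mono) auto
    finally show ?thesis .
  qed
  ultimately have "norm (contour_integral (linepath (Complex x T) (Complex 0 T)) (exp_div_cos l))
                   \<le> 1 / (cos x * cosh T) * norm (Complex 0 T - Complex x T)"
    using \<open>0 < cos x\<close> by (intro has_contour_integral_bound_linepath) auto
  also have "norm (Complex 0 T - Complex x T) = x"
    using assms by (simp add: complex_diff cmod_def)
  finally show ?thesis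
    by simp
qed

lemma exp_div_cos_integral_decomposition:
  fixes l x T :: real
  assumes "0 < x" "x < pi / 2" "0 < T"
  shows "of_real l * integral {0..x} (\<lambda>y. exp_div_cos l (of_real y)) - \<i>
       = - (of_real l * contour_integral (linepath (Complex x 0) (Complex x T)) (exp_div_cos l))
         - of_real l * contour_integral (linepath (Complex x T) (Complex 0 T)) (exp_div_cos l)
         - \<i> * of_real (1 - l * integral {0..T} (\<lambda>t. exp (- l * t) / cosh t))"
proof -
  define B where "B = integral {0..x} (\<lambda>y. exp_div_cos l (of_real y))"
  define I\<^sub>2 where "I\<^sub>2 = contour_integral (linepath (Complex x 0) (Complex x T)) (exp_div_cos l)"
  define I\<^sub>3 where "I\<^sub>3 = contour_integral (linepath (Complex x T) (Complex 0 T)) (exp_div_cos l)"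
  define H where "H = integral {0..T} (\<lambda>t. exp (- l * t) / cosh t)"
  have "B + I\<^sub>2 + I\<^sub>3 - \<i> * of_real H = 0"
    using rectangle_contour_integral_exp_div_cos[of x T l] assms
    by (simp add: B_def I\<^sub>2_def I\<^sub>3_def H_def contour_integral_exp_div_cos_real_segment
                  contour_integral_exp_div_cos_imaginary_segment)
  moreover have "of_real l * B - \<i> = - (of_real l * I\<^sub>2) - of_real l * I\<^sub>3 - \<i> * of_real (1 - l * H)
                  + of_real l * (B + I\<^sub>2 + I\<^sub>3 - \<i> * of_real H)"
    by (simp add: algebra_simps)
  ultimately show ?thesis
    by (simp add: B_def I\<^sub>2_def I\<^sub>3_def H_def)
qed

lemma norm_exp_div_cos_integral_le_at_height:
  fixes l x T :: real
  assumes "0 < l" "0 < x" "x < pi / 2" "0 < T"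
  shows "norm (of_real l * integral {0..x} (\<lambda>y. exp_div_cos l (of_real y)) - \<i>)
       \<le> 1 + (1 - 1 / ((l + 1) * (l + 2))) * (1 / cos x - 1) + l * x / (cos x * cosh T)"
proof -
  define I\<^sub>2 where "I\<^sub>2 = contour_integral (linepath (Complex x 0) (Complex x T)) (exp_div_cos l)"
  define I\<^sub>3 where "I\<^sub>3 = contour_integral (linepath (Complex x T) (Complex 0 T)) (exp_div_cos l)"
  define H where "H = integral {0..T} (\<lambda>t. exp (- l * t) / cosh t)"
  define m where "m = l * H"
  have "0 < cos x" "cos x < 1"
    using cos_pos_less_one assms by auto
  have m_le: "m \<le> 1 - 1 / ((l + 1) * (l + 2))"
    unfolding m_def H_def using assms by (intro laplace_transform_sech_bound) auto
  moreover have "0 < 1 / ((l + 1) * (l + 2))"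
    using assms by simp
  ultimately have "m \<le> 1"
    by linarith
  have "norm (- a - b - c) \<le> norm a + norm b + norm c" for a b c :: complex
    using norm_triangle_ineq4[of "- a - b" c] norm_triangle_ineq4[of "- a" b] by simp
  then have "norm (of_real l * integral {0..x} (\<lambda>y. exp_div_cos l (of_real y)) - \<i>)
             \<le> norm (of_real l * I\<^sub>2) + norm (of_real l * I\<^sub>3) + norm (\<i> * of_real (1 - m))"
    unfolding exp_div_cos_integral_decomposition[OF assms(2-4)] I\<^sub>2_def I\<^sub>3_def m_def H_def .
  also have "\<dots> = l * norm I\<^sub>2 + l * norm I\<^sub>3 + (1 - m)"
    using assms \<open>m \<le> 1\<close> by (simp add: norm_mult del: of_real_diff)
  finally have "norm (of_real l * integral {0..x} (\<lambda>y. exp_div_cos l (of_real y)) - \<i>)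
                \<le> l * norm I\<^sub>2 + l * norm I\<^sub>3 + (1 - m)" .
  moreover have "l * norm I\<^sub>2 \<le> l * (H / cos x)"
    using norm_contour_integral_exp_div_cos_vertical_le[of x T l] assms
    unfolding I\<^sub>2_def H_def by (intro mult_left_mono) auto
  then have "l * norm I\<^sub>2 \<le> m / cos x"
    by (simp add: m_def)
  moreover have "l * norm I\<^sub>3 \<le> l * (x / (cos x * cosh T))"
    using norm_contour_integral_exp_div_cos_horizontal_le[of l x T] assms
    unfolding I\<^sub>3_def by (intro mult_left_mono) auto
  moreover have "m * (1 / cos x - 1) \<le> (1 - 1 / ((l + 1) * (l + 2))) * (1 / cos x - 1)"
    using m_le \<open>0 < cos x\<close> \<open>cos x < 1\<close> by (intro mult_right_mono) auto
  ultimately show ?thesis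
    by (simp add: right_diff_distrib)
qed

lemma norm_exp_div_cos_integral_less:
  fixes l x :: real
  assumes "0 < l" "0 < x" "x < pi / 2"
  shows "norm (of_real l * integral {0..x} (\<lambda>y. exp_div_cos l (of_real y)) - \<i>) < 1 / cos x"
proof -
  define c where "c = 1 + (1 - 1 / ((l + 1) * (l + 2))) * (1 / cos x - 1)"
  have "0 < cos x" "cos x < 1"
    using cos_pos_less_one assms by auto
  have "((\<lambda>T. l * x / cos x / cosh T) \<longlongrightarrow> 0) at_top"
    by (rule tendsto_divide_0[OF tendsto_const filterlim_at_top_imp_at_infinity[OF cosh_real_at_top]])
  from tendsto_add[OF tendsto_const[of c] this]
  have "((\<lambda>T. c + l * x / (cos x * cosh T)) \<longlongrightarrow> c) at_top"
    by simp
  then have "norm (of_real l * integral {0..x} (\<lambda>y. exp_div_cos l (of_real y)) - \<i>) \<le> c"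
  proof (rule tendsto_lowerbound)
    show "\<forall>\<^sub>F T in at_top. norm (of_real l * integral {0..x} (\<lambda>y. exp_div_cos l (of_real y)) - \<i>)
                          \<le> c + l * x / (cos x * cosh T)"
      using eventually_gt_at_top[of 0] unfolding c_def
      by eventually_elim (use assms norm_exp_div_cos_integral_le_at_height in auto)
  qed simp
  also have "c < 1 / cos x"
  proof -
    have "0 < 1 / ((l + 1) * (l + 2)) * (1 / cos x - 1)"
      using assms \<open>0 < cos x\<close> \<open>cos x < 1\<close> by (intro mult_pos_pos) auto
    then show ?thesis
      unfolding c_def left_diff_distrib mult_1 by linarith
  qed
  finally show ?thesis .
qed

lemma abs_integral_cos_div_cos_less_pos:
  fixes l \<theta> x :: real
  assumes "0 < l" "0 < x" "x < pi / 2"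
  shows "\<bar>l * integral {0..x} (\<lambda>y. cos (l * y - \<theta>) / cos y) - sin \<theta>\<bar> < 1 / cos x"
proof -
  define B where "B = integral {0..x} (\<lambda>y. exp_div_cos l (of_real y))"
  define e where "e = exp (- (\<i> * of_real \<theta>))"
  have exp_div_cos_of_real: "exp_div_cos l (of_real y) = exp (\<i> * of_real (l * y)) / of_real (cos y)" for y
    by (simp add: exp_div_cos_def cos_of_real mult_ac)
  have "cos y \<noteq> 0" if "y \<in> {0..x}" for y
    using that assms cos_gt_zero_pi[of y] by auto
  then have "continuous_on {0..x} (\<lambda>y. exp_div_cos l (of_real y))"
    unfolding exp_div_cos_of_real by (intro continuous_intros) auto
  then have "((\<lambda>y. Re (e * exp_div_cos l (of_real y))) has_integral Re (e * B)) {0..x}"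
    unfolding B_def by (intro has_integral_Re has_integral_mult_right integrable_integral integrable_continuous_interval)
  moreover have "Re (e * exp_div_cos l (of_real y)) = cos (l * y - \<theta>) / cos y" for y
  proof -
    have "e * exp_div_cos l (of_real y) = exp (\<i> * of_real (l * y - \<theta>)) / of_real (cos y)"
      by (simp add: e_def exp_div_cos_of_real exp_add[symmetric] algebra_simps)
    then show ?thesis
      by (simp add: Re_divide_of_real Re_exp)
  qed
  ultimately have integral_eq: "integral {0..x} (\<lambda>y. cos (l * y - \<theta>) / cos y) = Re (e * B)"
    by (simp add: integral_unique)
  have sin_eq: "sin \<theta> = Re (e * \<i>)"
    by (simp add: e_def Re_exp Im_exp)
  have "l * integral {0..x} (\<lambda>y. cos (l * y - \<theta>) / cos y) - sin \<theta> = l * Re (e * B) - Re (e * \<i>)"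
    unfolding integral_eq sin_eq ..
  also have "\<dots> = Re (e * (of_real l * B - \<i>))"
    by (simp add: algebra_simps)
  also have "\<bar>\<dots>\<bar> \<le> norm (e * (of_real l * B - \<i>))"
    by (rule abs_Re_le_cmod)
  also have "\<dots> = norm (of_real l * B - \<i>)"
    by (simp add: e_def norm_mult norm_exp_eq_Re)
  also have "\<dots> < 1 / cos x"
    unfolding B_def using assms by (rule norm_exp_div_cos_integral_less)
  finally show ?thesis .
qed

lemma integral_cos_div_cos_neg:
  "(- l) * integral {0..x} (\<lambda>y. cos (- l * y - - \<theta>) / cos y) - sin (- \<theta>)
   = - (l * integral {0..x} (\<lambda>y. cos (l * y - \<theta>) / cos y) - sin \<theta>)"
proof -
  have "cos (- l * y - - \<theta>) = cos (l * y - \<theta>)" for y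
    using cos_minus[of "l * y - \<theta>"] by simp
  then show ?thesis
    by simp
qed

theorem corollary2:
  fixes lambda theta x :: real
  assumes "0 < x" and "x < pi / 2"
  shows "\<bar>lambda * integral {0..x} (\<lambda>y. cos (lambda * y - theta) / cos y) - sin theta\<bar> < 1 / cos x"
proof -
  consider "0 < lambda" | "lambda = 0" | "lambda < 0"
    by linarith
  then show ?thesis
  proof cases
    case 1
    then show ?thesis
      using assms by (rule abs_integral_cos_div_cos_less_pos)
  next
    case 2
    have "1 < 1 / cos x"
      using cos_pos_less_one[OF assms] by simp
    then have "\<bar>sin theta\<bar> < 1 / cos x"
      using abs_sin_le_one[of theta] by linarith
    with 2 show ?thesis
      by simp
  next
    case 3
    then show ?thesis
      using abs_integral_cos_div_cos_less_pos[of "- lambda" x "- theta"] assms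
      unfolding integral_cos_div_cos_neg abs_minus_cancel by simp
  qed
qed

end
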